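(* Let $\mathsf{G}$ be a strict monoidal category, let $\mathsf{X}$ be a small category, let $T:\mathsf{G}\to\mathsf{End}(\mathsf{X})$ be a strict monoidal functor, and let $\mathrm{W}$ be a monoidal weight on $\mathsf{G}$. Then the $\mathsf{G}$-interleaving distance $d_{T,\mathrm{W}}$ is an extended pseudometric on the object set $\mathsf{X}_0$; that is, $d_{T,\mathrm{W}}(X,X)=0$, $d_{T,\mathrm{W}}(X,Y)=d_{T,\mathrm{W}}(Y,X)$ and $d_{T,\mathrm{W}}(X,Z)\le d_{T,\mathrm{W}}(X,Y)+d_{T,\mathrm{W}}(Y,Z)$ for all $X,Y,Z\in\mathsf{X}_0$.
   Context: $\mathsf{G}$ is a strict monoidal category with tensor product written as juxtaposition $gh=g\otimes h$ on objects and unit object $e$. $\mathsf{End}(\mathsf{X})$ is the strict monoidal category whose objects are functors $\mathsf{X}\to\mathsf{X}$, whose morphisms are natural transformations, with tensor product given by composition of functors and horizontal composition $\bullet$ of natural transformations, and unit the identity functor $1_{\mathsf{X}}$. A strict monoidal functor $T$ satisfies $T(e)=1_{\mathsf X}$, $T_{gh}=T_gT_h$ (writing $T_g=T(g)$), and $T(\beta\otimes\alpha)=T(\beta)\bullet T(\alpha)$. A monoidal weight on $\mathsf{G}$ is a function $\mathrm{W}:\mathsf{G}_0\to\mathbb{R}\cup\{\infty\}$ with $\mathrm{W}(g)\ge 0$ for all $g$, $\mathrm{W}(e)=0$, and $\mathrm{W}(gf)\le \mathrm{W}(g)+\mathrm{W}(f)$ for all objects $f,g$. For $X,Y\in\mathsf{X}_0$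 and $g,h\in\mathsf{G}_0$, $X$ and $Y$ are $(g,h)$-interleaved if there exist morphisms $\phi:X\to T_g(Y)$ and $\psi:Y\to T_h(X)$ in $\mathsf{X}$ and morphisms $\alpha:e\to gh$, $\beta:e\to hg$ in $\mathsf{G}$ such that $T_g(\psi)\circ\phi=T(\alpha)_X$ and $T_h(\phi)\circ\psi=T(\beta)_Y$. The $\mathsf{G}$-interleaving distance is $d_{T,\mathrm{W}}(X,Y)=\inf\{\max\{\mathrm{W}(g),\mathrm{W}(h)\}: X,Y \text{ are } (g,h)\text{-interleaved}\}$, with $\inf\emptyset=\infty$. An extended pseudometric is a function to $[0,\infty]$ satisfying the three listed properties. *)

theory Defs
  imports Main "HOL-Library.Extended_Real"
begin

record ('o, 'a) cat =
  cat_obj :: "'o set"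
  cat_arr :: "'a set"
  cat_dom :: "'a \<Rightarrow> 'o"
  cat_cod :: "'a \<Rightarrow> 'o"
  cat_comp :: "'a \<Rightarrow> 'a \<Rightarrow> 'a"   (* cat_comp C g f = g \<circ> f *)
  cat_id :: "'o \<Rightarrow> 'a"

definition hom :: "('o, 'a, 'z) cat_scheme \<Rightarrow> 'o \<Rightarrow> 'o \<Rightarrow> 'a set" where
  "hom C x y = {f \<in> cat_arr C. cat_dom C f = x \<and> cat_cod C f = y}"

definition is_category :: "('o, 'a, 'z) cat_scheme \<Rightarrow> bool" where
  "is_category C \<longleftrightarrow>
     (\<forall>f \<in> cat_arr C. cat_dom C f \<in> cat_obj C \<and> cat_cod C f \<in> cat_obj C) \<and>
     (\<forall>x \<in> cat_obj C. cat_id C x \<in> hom C x x) \<and>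
     (\<forall>f \<in> cat_arr C. \<forall>g \<in> cat_arr C. cat_cod C f = cat_dom C g \<longrightarrow>
        cat_comp C g f \<in> hom C (cat_dom C f) (cat_cod C g)) \<and>
     (\<forall>f \<in> cat_arr C. cat_comp C (cat_id C (cat_cod C f)) f = f \<and>
                       cat_comp C f (cat_id C (cat_dom C f)) = f) \<and>
     (\<forall>f \<in> cat_arr C. \<forall>g \<in> cat_arr C. \<forall>h \<in> cat_arr C.
        cat_cod C f = cat_dom C g \<longrightarrow> cat_cod C g = cat_dom C h \<longrightarrow>
        cat_comp C h (cat_comp C g f) = cat_comp C (cat_comp C h g) f)"

record ('o, 'a) moncat = "('o, 'a) cat" +
  tens_obj :: "'o \<Rightarrow> 'o \<Rightarrow> 'o"
  tens_arr :: "'a \<Rightarrow> 'a \<Rightarrow> 'a"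
  munit :: "'o"

definition is_strict_monoidal_category :: "('o, 'a, 'z) moncat_scheme \<Rightarrow> bool" where
  "is_strict_monoidal_category G \<longleftrightarrow>
     is_category G \<and>
     munit G \<in> cat_obj G \<and>
     (\<forall>a \<in> cat_obj G. \<forall>b \<in> cat_obj G. tens_obj G a b \<in> cat_obj G) \<and>
     (\<forall>f \<in> cat_arr G. \<forall>g \<in> cat_arr G.
        tens_arr G f g \<in> hom G (tens_obj G (cat_dom G f) (cat_dom G g))
                               (tens_obj G (cat_cod G f) (cat_cod G g))) \<and>
     (\<forall>a \<in> cat_obj G. \<forall>b \<in> cat_obj G.
        tens_arr G (cat_id G a) (cat_id G b) = cat_id G (tens_obj G a b)) \<and>
     (\<forall>f \<in> cat_arr G. \<forall>f' \<in> cat_arr G. \<forall>g \<in> cat_arr G. \<forall>g' \<in> cat_arr G.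
        cat_cod G f = cat_dom G f' \<longrightarrow> cat_cod G g = cat_dom G g' \<longrightarrow>
        tens_arr G (cat_comp G f' f) (cat_comp G g' g)
          = cat_comp G (tens_arr G f' g') (tens_arr G f g)) \<and>
     (\<forall>a \<in> cat_obj G. \<forall>b \<in> cat_obj G. \<forall>c \<in> cat_obj G.
        tens_obj G (tens_obj G a b) c = tens_obj G a (tens_obj G b c)) \<and>
     (\<forall>f \<in> cat_arr G. \<forall>g \<in> cat_arr G. \<forall>h \<in> cat_arr G.
        tens_arr G (tens_arr G f g) h = tens_arr G f (tens_arr G g h)) \<and>
     (\<forall>a \<in> cat_obj G. tens_obj G (munit G) a = a \<and> tens_obj G a (munit G) = a) \<and>
     (\<forall>f \<in> cat_arr G. tens_arr G (cat_id G (munit G)) f = f \<and>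
                       tens_arr G f (cat_id G (munit G)) = f)"

text \<open>An endofunctor of X is given by its object map Fo and arrow map Fa
  (only their values on objects / arrows of X matter).\<close>

definition is_endofunctor ::
  "('xo, 'xa, 'z) cat_scheme \<Rightarrow> ('xo \<Rightarrow> 'xo) \<Rightarrow> ('xa \<Rightarrow> 'xa) \<Rightarrow> bool" where
  "is_endofunctor X Fo Fa \<longleftrightarrow>
     (\<forall>x \<in> cat_obj X. Fo x \<in> cat_obj X) \<and>
     (\<forall>f \<in> cat_arr X. Fa f \<in> hom X (Fo (cat_dom X f)) (Fo (cat_cod X f))) \<and>
     (\<forall>x \<in> cat_obj X. Fa (cat_id X x) = cat_id X (Fo x)) \<and>
     (\<forall>f \<in> cat_arr X. \<forall>g \<in> cat_arr X. cat_cod X f = cat_dom X g \<longrightarrow>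
        Fa (cat_comp X g f) = cat_comp X (Fa g) (Fa f))"

text \<open>A strict monoidal functor T : G \<rightarrow> End(X) is given by
  Tfo g / Tfa g : the object / arrow maps of the endofunctor T_g (g an object of G), and
  Tnat \<alpha> x   : the component at x of the natural transformation T(\<alpha>) (\<alpha> an arrow of G).
  Functors and natural transformations in End(X) are compared on the objects/arrows of X.
  Tensor in End(X): composition of functors, and horizontal composition
  (\<beta> \<bullet> \<alpha>)_x = T_{g'}(\<alpha>_x) \<circ> \<beta>_{T_h x} for \<beta> : g \<rightarrow> g', \<alpha> : h \<rightarrow> h'.\<close>

definition is_strict_monoidal_functor ::
  "('go, 'ga, 'z1) moncat_scheme \<Rightarrow> ('xo, 'xa, 'z2) cat_scheme \<Rightarrow>
   ('go \<Rightarrow> 'xo \<Rightarrow> 'xo) \<Rightarrow> ('go \<Rightarrow> 'xa \<Rightarrow> 'xa) \<Rightarrow> ('ga \<Rightarrow> 'xo \<Rightarrow> 'xa) \<Rightarrow> bool" where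
  "is_strict_monoidal_functor G X Tfo Tfa Tnat \<longleftrightarrow>
     \<comment> \<open>objects go to endofunctors\<close>
     (\<forall>g \<in> cat_obj G. is_endofunctor X (Tfo g) (Tfa g)) \<and>
     \<comment> \<open>arrows go to natural transformations T_{dom \<alpha>} \<Rightarrow> T_{cod \<alpha>}\<close>
     (\<forall>\<alpha> \<in> cat_arr G. \<forall>x \<in> cat_obj X.
        Tnat \<alpha> x \<in> hom X (Tfo (cat_dom G \<alpha>) x) (Tfo (cat_cod G \<alpha>) x)) \<and>
     (\<forall>\<alpha> \<in> cat_arr G. \<forall>f \<in> cat_arr X.
        cat_comp X (Tfa (cat_cod G \<alpha>) f) (Tnat \<alpha> (cat_dom X f))
          = cat_comp X (Tnat \<alpha> (cat_cod X f)) (Tfa (cat_dom G \<alpha>) f)) \<and>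
     \<comment> \<open>functoriality\<close>
     (\<forall>g \<in> cat_obj G. \<forall>x \<in> cat_obj X. Tnat (cat_id G g) x = cat_id X (Tfo g x)) \<and>
     (\<forall>\<alpha> \<in> cat_arr G. \<forall>\<beta> \<in> cat_arr G. cat_cod G \<alpha> = cat_dom G \<beta> \<longrightarrow>
        (\<forall>x \<in> cat_obj X. Tnat (cat_comp G \<beta> \<alpha>) x = cat_comp X (Tnat \<beta> x) (Tnat \<alpha> x))) \<and>
     \<comment> \<open>T(e) = 1_X\<close>
     (\<forall>x \<in> cat_obj X. Tfo (munit G) x = x) \<and>
     (\<forall>f \<in> cat_arr X. Tfa (munit G) f = f) \<and>
     \<comment> \<open>T_{gh} = T_g T_h\<close>
     (\<forall>g \<in> cat_obj G. \<forall>h \<in> cat_obj G.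
        (\<forall>x \<in> cat_obj X. Tfo (tens_obj G g h) x = Tfo g (Tfo h x)) \<and>
        (\<forall>f \<in> cat_arr X. Tfa (tens_obj G g h) f = Tfa g (Tfa h f))) \<and>
     \<comment> \<open>T(\<beta> \<otimes> \<alpha>) = T(\<beta>) \<bullet> T(\<alpha>)\<close>
     (\<forall>\<beta> \<in> cat_arr G. \<forall>\<alpha> \<in> cat_arr G. \<forall>x \<in> cat_obj X.
        Tnat (tens_arr G \<beta> \<alpha>) x
          = cat_comp X (Tfa (cat_cod G \<beta>) (Tnat \<alpha> x)) (Tnat \<beta> (Tfo (cat_dom G \<alpha>) x)))"

definition is_monoidal_weight :: "('go, 'ga, 'z) moncat_scheme \<Rightarrow> ('go \<Rightarrow> ereal) \<Rightarrow> bool" where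
  "is_monoidal_weight G W \<longleftrightarrow>
     (\<forall>g \<in> cat_obj G. W g \<ge> 0 \<and> W g \<noteq> -\<infinity>) \<and>
     W (munit G) = 0 \<and>
     (\<forall>f \<in> cat_obj G. \<forall>g \<in> cat_obj G. W (tens_obj G g f) \<le> W g + W f)"

definition interleaved ::
  "('go, 'ga, 'z1) moncat_scheme \<Rightarrow> ('xo, 'xa, 'z2) cat_scheme \<Rightarrow>
   ('go \<Rightarrow> 'xo \<Rightarrow> 'xo) \<Rightarrow> ('go \<Rightarrow> 'xa \<Rightarrow> 'xa) \<Rightarrow> ('ga \<Rightarrow> 'xo \<Rightarrow> 'xa) \<Rightarrow>
   'xo \<Rightarrow> 'xo \<Rightarrow> 'go \<Rightarrow> 'go \<Rightarrow> bool" where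
  "interleaved G X Tfo Tfa Tnat x y g h \<longleftrightarrow>
     (\<exists>\<phi> \<psi> \<alpha> \<beta>.
        \<phi> \<in> hom X x (Tfo g y) \<and> \<psi> \<in> hom X y (Tfo h x) \<and>
        \<alpha> \<in> hom G (munit G) (tens_obj G g h) \<and> \<beta> \<in> hom G (munit G) (tens_obj G h g) \<and>
        cat_comp X (Tfa g \<psi>) \<phi> = Tnat \<alpha> x \<and>
        cat_comp X (Tfa h \<phi>) \<psi> = Tnat \<beta> y)"

definition interleaving_distance ::
  "('go, 'ga, 'z1) moncat_scheme \<Rightarrow> ('xo, 'xa, 'z2) cat_scheme \<Rightarrow>
   ('go \<Rightarrow> 'xo \<Rightarrow> 'xo) \<Rightarrow> ('go \<Rightarrow> 'xa \<Rightarrow> 'xa) \<Rightarrow> ('ga \<Rightarrow> 'xo \<Rightarrow> 'xa) \<Rightarrow>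
   ('go \<Rightarrow> ereal) \<Rightarrow> 'xo \<Rightarrow> 'xo \<Rightarrow> ereal" where
  "interleaving_distance G X Tfo Tfa Tnat W x y =
     Inf {max (W g) (W h) | g h. g \<in> cat_obj G \<and> h \<in> cat_obj G \<and>
                                 interleaved G X Tfo Tfa Tnat x y g h}"

end

theory Submission
  imports Defs
begin

text \<open>Interleavings compose: if \<open>(\<phi>, \<psi>, \<alpha>)\<close> witnesses one triangle identity for \<open>X, Y\<close> with
  respect to \<open>(g, h)\<close> and \<open>(\<phi>', \<psi>', \<alpha>')\<close> one for \<open>Y, Z\<close> with respect to \<open>(g', h')\<close>, then
  \<open>T\<^sub>g(\<phi>') \<circ> \<phi>\<close> and \<open>T\<^sub>h\<^sub>'(\<psi>) \<circ> \<psi>'\<close> satisfy it for \<open>X, Z\<close> with respect to \<open>(gg', h'h)\<close>, the unit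
  being \<open>(1\<^sub>g \<otimes> \<alpha>' \<otimes> 1\<^sub>h) \<circ> \<alpha>\<close>; the only ingredients are functoriality of \<open>T\<^sub>g\<close> and naturality
  of \<open>T(\<alpha>')\<close>. Subadditivity of the weight then turns composition of interleavings into the
  triangle inequality, while identities give \<open>d(X, X) = 0\<close> and symmetry is built into the definition.\<close>

lemma ereal_le_Inf_add:
  fixes A B :: "ereal set" and c :: ereal
  assumes A: "\<And>a. a \<in> A \<Longrightarrow> 0 \<le> a" and B: "\<And>b. b \<in> B \<Longrightarrow> 0 \<le> b"
    and le: "\<And>a b. a \<in> A \<Longrightarrow> b \<in> B \<Longrightarrow> c \<le> a + b"
  shows "c \<le> Inf A + Inf B"
proof (cases "A = {} \<or> B = {}")
  case True
  have "0 \<le> Inf A" "0 \<le> Inf B"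
    using A B by (auto intro: Inf_greatest)
  with True show ?thesis
    by (auto simp: top_ereal_def)
next
  case False
  have "0 \<le> Inf B"
    using B by (auto intro: Inf_greatest)
  then have "Inf A + Inf B = (INF a\<in>A. a + Inf B)"
    using INF_ereal_add_left[of A "Inf B" "\<lambda>a. a"] False A by auto
  also have "\<dots> = (INF a\<in>A. INF b\<in>B. a + b)"
    using INF_ereal_add_right[of B _ "\<lambda>b. b"] False A B by (auto intro!: INF_cong)
  also have "c \<le> \<dots>"
    using le by (auto intro!: INF_greatest)
  finally show ?thesis .
qed

locale category =
  fixes C :: "('o, 'a, 'z) cat_scheme"
  assumes is_category: "is_category C"
begin

lemma comp_in_hom: "f \<in> hom C a b \<Longrightarrow> g \<in> hom C b c \<Longrightarrow> cat_comp C g f \<in> hom C a c"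
  using is_category unfolding is_category_def hom_def by auto

lemma id_in_hom: "a \<in> cat_obj C \<Longrightarrow> cat_id C a \<in> hom C a a"
  using is_category unfolding is_category_def by auto

lemma comp_id_left: "f \<in> hom C a b \<Longrightarrow> cat_comp C (cat_id C b) f = f"
  using is_category unfolding is_category_def hom_def by auto

lemma comp_id_right: "f \<in> hom C a b \<Longrightarrow> cat_comp C f (cat_id C a) = f"
  using is_category unfolding is_category_def hom_def by auto

lemma comp_assoc:
  "f \<in> hom C a b \<Longrightarrow> g \<in> hom C b c \<Longrightarrow> h \<in> hom C c d \<Longrightarrow>
   cat_comp C h (cat_comp C g f) = cat_comp C (cat_comp C h g) f"
  using is_category unfolding is_category_def hom_def by auto

lemma hom_dom_obj: "f \<in> hom C a b \<Longrightarrow> a \<in> cat_obj C"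
  using is_category unfolding is_category_def hom_def by auto

lemma hom_cod_obj: "f \<in> hom C a b \<Longrightarrow> b \<in> cat_obj C"
  using is_category unfolding is_category_def hom_def by auto

end

locale strict_monoidal_category =
  fixes G :: "('o, 'a, 'z) moncat_scheme"
  assumes is_strict_monoidal_category: "is_strict_monoidal_category G"
begin

sublocale category G
  using is_strict_monoidal_category
  by unfold_locales (simp add: is_strict_monoidal_category_def)

lemma unit_obj: "munit G \<in> cat_obj G"
  using is_strict_monoidal_category unfolding is_strict_monoidal_category_def by auto

lemma tens_obj_closed: "a \<in> cat_obj G \<Longrightarrow> b \<in> cat_obj G \<Longrightarrow> tens_obj G a b \<in> cat_obj G"
  using is_strict_monoidal_category unfolding is_strict_monoidal_category_def by auto

lemma tens_arr_in_hom:
  "f \<in> hom G a b \<Longrightarrow> g \<in> hom G c d \<Longrightarrow>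
   tens_arr G f g \<in> hom G (tens_obj G a c) (tens_obj G b d)"
  using is_strict_monoidal_category unfolding is_strict_monoidal_category_def hom_def by auto

lemma tens_obj_assoc:
  "a \<in> cat_obj G \<Longrightarrow> b \<in> cat_obj G \<Longrightarrow> c \<in> cat_obj G \<Longrightarrow>
   tens_obj G (tens_obj G a b) c = tens_obj G a (tens_obj G b c)"
  using is_strict_monoidal_category unfolding is_strict_monoidal_category_def by auto

lemma tens_unit_left: "a \<in> cat_obj G \<Longrightarrow> tens_obj G (munit G) a = a"
  using is_strict_monoidal_category unfolding is_strict_monoidal_category_def by auto

end

locale monoidal_action =
  G: strict_monoidal_category G + X: category X
  for G :: "('go, 'ga, 'z1) moncat_scheme" and X :: "('xo, 'xa, 'z2) cat_scheme" +
  fixes Tfo :: "'go \<Rightarrow> 'xo \<Rightarrow> 'xo" and Tfa :: "'go \<Rightarrow> 'xa \<Rightarrow> 'xa"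
    and Tnat :: "'ga \<Rightarrow> 'xo \<Rightarrow> 'xa"
  assumes is_strict_monoidal_functor: "is_strict_monoidal_functor G X Tfo Tfa Tnat"
begin

abbreviation e :: 'go where "e \<equiv> munit G"

abbreviation tens :: "'go \<Rightarrow> 'go \<Rightarrow> 'go" (infixr "\<otimes>" 70) where
  "g \<otimes> h \<equiv> tens_obj G g h"

abbreviation Xcomp :: "'xa \<Rightarrow> 'xa \<Rightarrow> 'xa" (infixr "\<cdot>" 55) where
  "k \<cdot> f \<equiv> cat_comp X k f"

lemma map_obj: "g \<in> cat_obj G \<Longrightarrow> x \<in> cat_obj X \<Longrightarrow> Tfo g x \<in> cat_obj X"
  using is_strict_monoidal_functor
  unfolding is_strict_monoidal_functor_def is_endofunctor_def by auto

lemma map_in_hom: "g \<in> cat_obj G \<Longrightarrow> f \<in> hom X a b \<Longrightarrow> Tfa g f \<in> hom X (Tfo g a) (Tfo g b)"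
  using is_strict_monoidal_functor
  unfolding is_strict_monoidal_functor_def is_endofunctor_def hom_def by auto

lemma map_id: "g \<in> cat_obj G \<Longrightarrow> a \<in> cat_obj X \<Longrightarrow> Tfa g (cat_id X a) = cat_id X (Tfo g a)"
  using is_strict_monoidal_functor
  unfolding is_strict_monoidal_functor_def is_endofunctor_def by auto

lemma map_comp:
  "g \<in> cat_obj G \<Longrightarrow> f \<in> hom X a b \<Longrightarrow> k \<in> hom X b c \<Longrightarrow> Tfa g (k \<cdot> f) = Tfa g k \<cdot> Tfa g f"
  using is_strict_monoidal_functor
  unfolding is_strict_monoidal_functor_def is_endofunctor_def hom_def by auto

lemma nat_in_hom: "\<alpha> \<in> hom G a b \<Longrightarrow> x \<in> cat_obj X \<Longrightarrow> Tnat \<alpha> x \<in> hom X (Tfo a x) (Tfo b x)"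
  using is_strict_monoidal_functor unfolding is_strict_monoidal_functor_def hom_def by auto

lemma nat_natural:
  "\<alpha> \<in> hom G a b \<Longrightarrow> f \<in> hom X x y \<Longrightarrow> Tfa b f \<cdot> Tnat \<alpha> x = Tnat \<alpha> y \<cdot> Tfa a f"
  using is_strict_monoidal_functor unfolding is_strict_monoidal_functor_def hom_def by auto

lemma nat_id: "g \<in> cat_obj G \<Longrightarrow> x \<in> cat_obj X \<Longrightarrow> Tnat (cat_id G g) x = cat_id X (Tfo g x)"
  using is_strict_monoidal_functor unfolding is_strict_monoidal_functor_def by auto

lemma nat_comp:
  "\<alpha> \<in> hom G a b \<Longrightarrow> \<beta> \<in> hom G b c \<Longrightarrow> x \<in> cat_obj X \<Longrightarrow>
   Tnat (cat_comp G \<beta> \<alpha>) x = Tnat \<beta> x \<cdot> Tnat \<alpha> x"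
  using is_strict_monoidal_functor unfolding is_strict_monoidal_functor_def hom_def by auto

lemma unit_map_obj: "x \<in> cat_obj X \<Longrightarrow> Tfo e x = x"
  using is_strict_monoidal_functor unfolding is_strict_monoidal_functor_def by auto

lemma unit_map_arr: "f \<in> hom X a b \<Longrightarrow> Tfa e f = f"
  using is_strict_monoidal_functor unfolding is_strict_monoidal_functor_def hom_def by auto

lemma tens_map_obj:
  "g \<in> cat_obj G \<Longrightarrow> h \<in> cat_obj G \<Longrightarrow> x \<in> cat_obj X \<Longrightarrow> Tfo (g \<otimes> h) x = Tfo g (Tfo h x)"
  using is_strict_monoidal_functor unfolding is_strict_monoidal_functor_def by auto

lemma tens_map_arr:
  "g \<in> cat_obj G \<Longrightarrow> h \<in> cat_obj G \<Longrightarrow> f \<in> hom X a b \<Longrightarrow> Tfa (g \<otimes> h) f = Tfa g (Tfa h f)"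
  using is_strict_monoidal_functor unfolding is_strict_monoidal_functor_def hom_def by auto

lemma nat_tens_arr:
  "\<beta> \<in> hom G a b \<Longrightarrow> \<alpha> \<in> hom G c d \<Longrightarrow> x \<in> cat_obj X \<Longrightarrow>
   Tnat (tens_arr G \<beta> \<alpha>) x = Tfa b (Tnat \<alpha> x) \<cdot> Tnat \<beta> (Tfo c x)"
  using is_strict_monoidal_functor unfolding is_strict_monoidal_functor_def hom_def by auto

lemma nat_whisker_left:
  assumes g: "g \<in> cat_obj G" and \<beta>: "\<beta> \<in> hom G a b" and x: "x \<in> cat_obj X"
  shows "Tnat (tens_arr G (cat_id G g) \<beta>) x = Tfa g (Tnat \<beta> x)"
proof -
  have \<beta>x: "Tnat \<beta> x \<in> hom X (Tfo a x) (Tfo b x)"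
    using \<beta> x by (rule nat_in_hom)
  then have "Tfo a x \<in> cat_obj X"
    by (rule X.hom_dom_obj)
  then show ?thesis
    using nat_tens_arr[OF G.id_in_hom[OF g] \<beta> x] nat_id[OF g] X.comp_id_right[OF map_in_hom[OF g \<beta>x]]
    by simp
qed

lemma nat_whisker_right:
  assumes \<beta>: "\<beta> \<in> hom G a b" and h: "h \<in> cat_obj G" and x: "x \<in> cat_obj X"
  shows "Tnat (tens_arr G \<beta> (cat_id G h)) x = Tnat \<beta> (Tfo h x)"
proof -
  have hx: "Tfo h x \<in> cat_obj X"
    using h x by (rule map_obj)
  show ?thesis
    using nat_tens_arr[OF \<beta> G.id_in_hom[OF h] x] nat_id[OF h x] map_id[OF G.hom_cod_obj[OF \<beta>] hx]
      X.comp_id_left[OF nat_in_hom[OF \<beta> hx]]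
    by simp
qed

lemma nat_whisker_both:
  assumes g: "g \<in> cat_obj G" and h: "h \<in> cat_obj G" and \<beta>: "\<beta> \<in> hom G a b" and x: "x \<in> cat_obj X"
  shows "Tnat (tens_arr G (cat_id G g) (tens_arr G \<beta> (cat_id G h))) x = Tfa g (Tnat \<beta> (Tfo h x))"
  using nat_whisker_left[OF g G.tens_arr_in_hom[OF \<beta> G.id_in_hom[OF h]] x] nat_whisker_right[OF \<beta> h x]
  by simp

lemma nat_unit_natural:
  assumes \<alpha>: "\<alpha> \<in> hom G e k" and f: "f \<in> hom X a b"
  shows "Tfa k f \<cdot> Tnat \<alpha> a = Tnat \<alpha> b \<cdot> f"
  using nat_natural[OF \<alpha> f] unit_map_arr[OF f] by simp

definition half_interleaving :: "'xo \<Rightarrow> 'xo \<Rightarrow> 'go \<Rightarrow> 'go \<Rightarrow> 'xa \<Rightarrow> 'xa \<Rightarrow> 'ga \<Rightarrow> bool" where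
  "half_interleaving x y g h \<phi> \<psi> \<alpha> \<longleftrightarrow>
     \<phi> \<in> hom X x (Tfo g y) \<and> \<psi> \<in> hom X y (Tfo h x) \<and> \<alpha> \<in> hom G e (g \<otimes> h) \<and>
     Tfa g \<psi> \<cdot> \<phi> = Tnat \<alpha> x"

lemma interleaved_iff_half_interleavings:
  "interleaved G X Tfo Tfa Tnat x y g h \<longleftrightarrow>
   (\<exists>\<phi> \<psi> \<alpha> \<beta>. half_interleaving x y g h \<phi> \<psi> \<alpha> \<and> half_interleaving y x h g \<psi> \<phi> \<beta>)"
  unfolding interleaved_def half_interleaving_def by blast

lemma half_interleaving_id:
  assumes x: "x \<in> cat_obj X"
  shows "half_interleaving x x e e (cat_id X x) (cat_id X x) (cat_id G e)"
  using X.id_in_hom[OF x] unit_map_obj[OF x] G.id_in_hom[OF G.unit_obj] G.tens_unit_left[OF G.unit_obj]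
    unit_map_arr[OF X.id_in_hom[OF x]] X.comp_id_left[OF X.id_in_hom[OF x]] nat_id[OF G.unit_obj x]
  unfolding half_interleaving_def by simp

lemma half_interleaving_slide:
  assumes g': "g' \<in> cat_obj G" and h': "h' \<in> cat_obj G"
    and yz: "half_interleaving y z g' h' \<phi>' \<psi>' \<alpha>'" and f: "f \<in> hom X y a"
  shows "Tfa g' (Tfa h' f \<cdot> \<psi>') \<cdot> \<phi>' = Tnat \<alpha>' a \<cdot> f"
proof -
  from yz have \<phi>': "\<phi>' \<in> hom X y (Tfo g' z)" and \<psi>': "\<psi>' \<in> hom X z (Tfo h' y)"
    and \<alpha>': "\<alpha>' \<in> hom G e (g' \<otimes> h')" and eq': "Tfa g' \<psi>' \<cdot> \<phi>' = Tnat \<alpha>' y"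
    unfolding half_interleaving_def by auto
  have h'f: "Tfa h' f \<in> hom X (Tfo h' y) (Tfo h' a)"
    using h' f by (rule map_in_hom)
  have "Tfa g' (Tfa h' f \<cdot> \<psi>') \<cdot> \<phi>' = Tfa g' (Tfa h' f) \<cdot> (Tfa g' \<psi>' \<cdot> \<phi>')"
    using map_comp[OF g' \<psi>' h'f] X.comp_assoc[OF \<phi>' map_in_hom[OF g' \<psi>'] map_in_hom[OF g' h'f]]
    by simp
  also have "\<dots> = Tfa (g' \<otimes> h') f \<cdot> Tnat \<alpha>' y"
    using eq' tens_map_arr[OF g' h' f] by simp
  also have "\<dots> = Tnat \<alpha>' a \<cdot> f"
    using \<alpha>' f by (rule nat_unit_natural)
  finally show ?thesis .
qed

lemma half_interleaving_comp:
  assumes g: "g \<in> cat_obj G" and h: "h \<in> cat_obj G" and g': "g' \<in> cat_obj G" and h': "h' \<in> cat_obj G"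
    and xy: "half_interleaving x y g h \<phi> \<psi> \<alpha>" and yz: "half_interleaving y z g' h' \<phi>' \<psi>' \<alpha>'"
  shows "half_interleaving x z (g \<otimes> g') (h' \<otimes> h) (Tfa g \<phi>' \<cdot> \<phi>) (Tfa h' \<psi> \<cdot> \<psi>')
           (cat_comp G (tens_arr G (cat_id G g) (tens_arr G \<alpha>' (cat_id G h))) \<alpha>)"
proof -
  let ?\<gamma> = "tens_arr G (cat_id G g) (tens_arr G \<alpha>' (cat_id G h))"
  from xy have \<phi>: "\<phi> \<in> hom X x (Tfo g y)" and \<psi>: "\<psi> \<in> hom X y (Tfo h x)"
    and \<alpha>: "\<alpha> \<in> hom G e (g \<otimes> h)" and eq: "Tfa g \<psi> \<cdot> \<phi> = Tnat \<alpha> x"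
    unfolding half_interleaving_def by auto
  from yz have \<phi>': "\<phi>' \<in> hom X y (Tfo g' z)" and \<psi>': "\<psi>' \<in> hom X z (Tfo h' y)"
    and \<alpha>': "\<alpha>' \<in> hom G e (g' \<otimes> h')"
    unfolding half_interleaving_def by auto
  have x: "x \<in> cat_obj X" and z: "z \<in> cat_obj X"
    using \<phi> \<psi>' by (auto intro: X.hom_dom_obj)
  have hx: "Tfo h x \<in> cat_obj X"
    using h x by (rule map_obj)
  have \<gamma>: "?\<gamma> \<in> hom G (g \<otimes> h) ((g \<otimes> g') \<otimes> (h' \<otimes> h))"
    using G.tens_arr_in_hom[OF G.id_in_hom[OF g] G.tens_arr_in_hom[OF \<alpha>' G.id_in_hom[OF h]]]
    by (simp add: G.tens_unit_left G.tens_obj_assoc G.tens_obj_closed g g' h h')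
  have \<alpha>'hx: "Tnat \<alpha>' (Tfo h x) \<in> hom X (Tfo h x) (Tfo (g' \<otimes> h') (Tfo h x))"
    using nat_in_hom[OF \<alpha>' hx] unit_map_obj[OF hx] by simp
  have \<psi>'': "Tfa g' (Tfa h' \<psi> \<cdot> \<psi>') \<in> hom X (Tfo g' z) (Tfo g' (Tfo h' (Tfo h x)))"
    using map_in_hom[OF g' X.comp_in_hom[OF \<psi>' map_in_hom[OF h' \<psi>]]] .
  have "Tfa (g \<otimes> g') (Tfa h' \<psi> \<cdot> \<psi>') \<cdot> (Tfa g \<phi>' \<cdot> \<phi>)
      = Tfa g (Tfa g' (Tfa h' \<psi> \<cdot> \<psi>')) \<cdot> (Tfa g \<phi>' \<cdot> \<phi>)"
    using tens_map_arr[OF g g' X.comp_in_hom[OF \<psi>' map_in_hom[OF h' \<psi>]]] by simp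
  also have "\<dots> = Tfa g (Tfa g' (Tfa h' \<psi> \<cdot> \<psi>') \<cdot> \<phi>') \<cdot> \<phi>"
    using X.comp_assoc[OF \<phi> map_in_hom[OF g \<phi>'] map_in_hom[OF g \<psi>'']] map_comp[OF g \<phi>' \<psi>'']
    by simp
  also have "\<dots> = Tfa g (Tnat \<alpha>' (Tfo h x) \<cdot> \<psi>) \<cdot> \<phi>"
    using half_interleaving_slide[OF g' h' yz \<psi>] by simp
  also have "\<dots> = Tfa g (Tnat \<alpha>' (Tfo h x)) \<cdot> Tnat \<alpha> x"
    using map_comp[OF g \<psi> \<alpha>'hx] X.comp_assoc[OF \<phi> map_in_hom[OF g \<psi>] map_in_hom[OF g \<alpha>'hx]] eq
    by simp
  also have "\<dots> = Tnat (cat_comp G ?\<gamma> \<alpha>) x"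
    using nat_comp[OF \<alpha> \<gamma> x] nat_whisker_both[OF g h \<alpha>' x] by simp
  finally show ?thesis
    unfolding half_interleaving_def
    using X.comp_in_hom[OF \<phi> map_in_hom[OF g \<phi>']] X.comp_in_hom[OF \<psi>' map_in_hom[OF h' \<psi>]]
      G.comp_in_hom[OF \<alpha> \<gamma>] tens_map_obj g g' h h' z x
    by simp
qed

lemma interleaved_refl: "x \<in> cat_obj X \<Longrightarrow> interleaved G X Tfo Tfa Tnat x x e e"
  unfolding interleaved_iff_half_interleavings using half_interleaving_id by blast

lemma interleaved_trans:
  assumes "g \<in> cat_obj G" "h \<in> cat_obj G" "g' \<in> cat_obj G" "h' \<in> cat_obj G"
    and "interleaved G X Tfo Tfa Tnat x y g h" and "interleaved G X Tfo Tfa Tnat y z g' h'"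
  shows "interleaved G X Tfo Tfa Tnat x z (g \<otimes> g') (h' \<otimes> h)"
  using assms half_interleaving_comp[of g h g' h'] half_interleaving_comp[of h' g' h g]
  unfolding interleaved_iff_half_interleavings by meson

end

lemma interleaved_sym:
  "interleaved G X Tfo Tfa Tnat x y g h \<Longrightarrow> interleaved G X Tfo Tfa Tnat y x h g"
  unfolding interleaved_def by blast

lemma interleaving_distance_commute:
  "interleaving_distance G X Tfo Tfa Tnat W x y = interleaving_distance G X Tfo Tfa Tnat W y x"
proof -
  let ?S = "\<lambda>a b. {max (W g) (W h) | g h.
              g \<in> cat_obj G \<and> h \<in> cat_obj G \<and> interleaved G X Tfo Tfa Tnat a b g h}"
  have swap: "?S a b \<subseteq> ?S b a" for a b
  proof
    fix m
    assume "m \<in> ?S a b"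
    then obtain g h where "m = max (W g) (W h)" "g \<in> cat_obj G" "h \<in> cat_obj G"
      "interleaved G X Tfo Tfa Tnat a b g h"
      by blast
    then have "m = max (W h) (W g) \<and> h \<in> cat_obj G \<and> g \<in> cat_obj G \<and>
        interleaved G X Tfo Tfa Tnat b a h g"
      by (simp add: max.commute interleaved_sym)
    then show "m \<in> ?S b a"
      by blast
  qed
  then have "?S x y = ?S y x"
    by (intro subset_antisym)
  then show ?thesis
    unfolding interleaving_distance_def by simp
qed

lemma interleaving_distance_le:
  assumes "g \<in> cat_obj G" "h \<in> cat_obj G" "interleaved G X Tfo Tfa Tnat x y g h"
  shows "interleaving_distance G X Tfo Tfa Tnat W x y \<le> max (W g) (W h)"
  unfolding interleaving_distance_def using assms by (blast intro: Inf_lower)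

locale weighted_action = monoidal_action +
  fixes W
  assumes is_monoidal_weight: "is_monoidal_weight G W"
begin

abbreviation d where
  "d \<equiv> interleaving_distance G X Tfo Tfa Tnat W"

lemma weight_nonneg: "g \<in> cat_obj G \<Longrightarrow> 0 \<le> W g"
  using is_monoidal_weight unfolding is_monoidal_weight_def by auto

lemma weight_unit: "W e = 0"
  using is_monoidal_weight unfolding is_monoidal_weight_def by auto

lemma weight_tens_le: "g \<in> cat_obj G \<Longrightarrow> h \<in> cat_obj G \<Longrightarrow> W (g \<otimes> h) \<le> W g + W h"
  using is_monoidal_weight unfolding is_monoidal_weight_def by auto

lemma interleaving_distance_nonneg: "0 \<le> d x y"
  unfolding interleaving_distance_def
  by (force intro: Inf_greatest weight_nonneg simp: le_max_iff_disj)

lemma interleaving_distance_self: "x \<in> cat_obj X \<Longrightarrow> d x x = 0"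
  using interleaving_distance_le[OF G.unit_obj G.unit_obj interleaved_refl, of x W]
    interleaving_distance_nonneg[of x x]
  by (simp add: weight_unit)

lemma interleaving_distance_triangle: "d x z \<le> d x y + d y z"
proof -
  have "d x z \<le> max (W g) (W h) + max (W g') (W h')"
    if g: "g \<in> cat_obj G" and h: "h \<in> cat_obj G" and g': "g' \<in> cat_obj G" and h': "h' \<in> cat_obj G"
      and "interleaved G X Tfo Tfa Tnat x y g h" and "interleaved G X Tfo Tfa Tnat y z g' h'"
    for g h g' h'
  proof -
    have "d x z \<le> max (W (g \<otimes> g')) (W (h' \<otimes> h))"
      using that by (intro interleaving_distance_le interleaved_trans G.tens_obj_closed)
    also have "\<dots> \<le> max (W g + W g') (W h + W h')"
    proof (rule max.mono)
      show "W (h' \<otimes> h) \<le> W h + W h'"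
        using weight_tens_le[OF h' h] by (simp add: add.commute)
    qed (rule weight_tens_le[OF g g'])
    also have "\<dots> \<le> max (W g) (W h) + max (W g') (W h')"
      by (intro max.boundedI add_mono) simp_all
    finally show ?thesis .
  qed
  then show ?thesis
    unfolding interleaving_distance_def[of _ _ _ _ _ _ x y] interleaving_distance_def[of _ _ _ _ _ _ y z]
    by (intro ereal_le_Inf_add) (auto simp: le_max_iff_disj intro: weight_nonneg)
qed

end

theorem theorem3p8:
  fixes G :: "('go, 'ga) moncat" and X :: "('xo, 'xa) cat"
    and Tfo :: "'go \<Rightarrow> 'xo \<Rightarrow> 'xo" and Tfa :: "'go \<Rightarrow> 'xa \<Rightarrow> 'xa"
    and Tnat :: "'ga \<Rightarrow> 'xo \<Rightarrow> 'xa" and W :: "'go \<Rightarrow> ereal"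
  assumes "is_strict_monoidal_category G"
    and "is_category X"
    and "is_strict_monoidal_functor G X Tfo Tfa Tnat"
    and "is_monoidal_weight G W"
  shows "(\<forall>x \<in> cat_obj X. interleaving_distance G X Tfo Tfa Tnat W x x = 0) \<and>
         (\<forall>x \<in> cat_obj X. \<forall>y \<in> cat_obj X.
            interleaving_distance G X Tfo Tfa Tnat W x y = interleaving_distance G X Tfo Tfa Tnat W y x) \<and>
         (\<forall>x \<in> cat_obj X. \<forall>y \<in> cat_obj X. \<forall>z \<in> cat_obj X.
            interleaving_distance G X Tfo Tfa Tnat W x z
              \<le> interleaving_distance G X Tfo Tfa Tnat W x y + interleaving_distance G X Tfo Tfa Tnat W y z)"
proof -
  interpret weighted_action G X Tfo Tfa Tnat W
    by unfold_locales (fact assms)+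
  show ?thesis
    by (intro conjI ballI interleaving_distance_self interleaving_distance_commute
        interleaving_distance_triangle)
qed

end
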